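(* If a topological space $X$ is productively countably tight, then $\mathsf{S}_1(\Omega_x, \Omega_x)$ holds for each $x \in X$; that is, for every $x \in X$ and every sequence $(A_n)_{n \in \omega}$ of elements of $\Omega_x$ one can select $a_n \in A_n$ such that $\{a_n : n \in \omega\} \in \Omega_x$.
   Context: For a point $x$ of a space $X$, $\Omega_x$ denotes the collection of all sets $A \subset X$ such that $x \notin A$ and $x \in \overline{A}$. A space is countably tight if for every point $y$ and every set $A$ with $y \in \overline{A}$ there is a countable $B \subset A$ with $y \in \overline{B}$. $X$ is productively countably tight if $X \times Y$ is countably tight for every countably tight space $Y$. *)

theory Defs
  imports "HOL-Analysis.Analysis"
begin

definition Omega_pt :: "'a topology \<Rightarrow> 'a \<Rightarrow> 'a set set" where
  "Omega_pt X x = {A. A \<subseteq> topspace X \<and> x \<notin> A \<and> x \<in> X closure_of A}"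

definition countably_tight :: "'a topology \<Rightarrow> bool" where
  "countably_tight X \<longleftrightarrow>
     (\<forall>y A. y \<in> topspace X \<and> A \<subseteq> topspace X \<and> y \<in> X closure_of A \<longrightarrow>
        (\<exists>B. B \<subseteq> A \<and> countable B \<and> y \<in> X closure_of B))"

text \<open>HOL cannot quantify over all types inside a formula; the test spaces Y
  range over all topologies on the (large) type of sets of sets of pairs
  ('a \<times> nat), which contains (up to homeomorphism) every space of cardinality
  at most 2^(2^(|'a| * aleph_0)).\<close>
definition productively_countably_tight :: "'a topology \<Rightarrow> bool" where
  "productively_countably_tight X \<longleftrightarrow>
     (\<forall>Y :: (('a \<times> nat) set set) topology.
        countably_tight Y \<longrightarrow> countably_tight (prod_topology X Y))"

definition S1_Omega :: "'a topology \<Rightarrow> 'a \<Rightarrow> bool" where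
  "S1_Omega X x \<longleftrightarrow>
     (\<forall>A :: nat \<Rightarrow> 'a set. (\<forall>n. A n \<in> Omega_pt X x) \<longrightarrow>
        (\<exists>a. (\<forall>n. a n \<in> A n) \<and> range a \<in> Omega_pt X x))"

end

theory Submission
  imports Defs
begin

text \<open>Let \<open>B\<^sub>n\<close> be countable sets accumulating at \<open>x\<close> (countable tightness of \<open>X\<close>,
  which follows by testing against a one-point space, reduces arbitrary \<open>A\<^sub>n \<in> \<Omega>\<^sub>x\<close> to
  this case). Take the sequential fan \<open>F\<close> whose spines are indexed by the selectors
  \<open>w \<in> \<Pi>\<^sub>n B\<^sub>n\<close>, and code the finite prefixes \<open>w|k\<close> injectively by natural numbers
  \<open>c(w|k)\<close>. In \<open>X \<times> F\<close> the point \<open>(x, apex)\<close> lies in the closure of the set of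
  points \<open>(w(c(w|k)), (w, k))\<close>, so by countable tightness already in the closure of a
  countable part of it, which meets only countably many spines \<open>J\<close>. Enumerating \<open>J\<close>, cut
  each spine \<open>w\<close> at a level \<open>N w\<close> beyond its splitting points with all earlier spines;
  then the positions \<open>c(w|k)\<close>, \<open>k \<ge> N w\<close>, of distinct spines are disjoint and one
  selector \<open>h\<close> agrees with every \<open>w \<in> J\<close> there. Testing against the neighbourhoods
  \<open>U \<times> V\<close>, where \<open>V\<close> is the apex neighbourhood cutting each \<open>w \<in> J\<close> at \<open>N w\<close>, shows
  that every neighbourhood \<open>U\<close> of \<open>x\<close> meets the range of \<open>h\<close>.\<close>

lemma countably_tight_closure_ofD:
  assumes "countably_tight X" "y \<in> X closure_of A"
  obtains B where "B \<subseteq> A" "countable B" "y \<in> X closure_of B"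
proof -
  have "y \<in> topspace X"
    using assms(2) closure_of_subset_topspace by fast
  moreover have "y \<in> X closure_of (topspace X \<inter> A)"
    using assms(2) by (simp flip: closure_of_restrict)
  ultimately obtain B where "B \<subseteq> topspace X \<inter> A" "countable B" "y \<in> X closure_of B"
    using assms(1)[unfolded countably_tight_def, rule_format, of y "topspace X \<inter> A"] by blast
  then show thesis using that by blast
qed

lemma countably_tight_obtains_countable_subsets:
  assumes "countably_tight X" "\<forall>n. y \<in> X closure_of A n"
  obtains B where "\<And>n. B n \<subseteq> A n" "\<And>n. countable (B n)" "\<And>n. y \<in> X closure_of B n"
proof -
  have "\<exists>B. B \<subseteq> A n \<and> countable B \<and> y \<in> X closure_of B" for n
  proof -
    from assms(1) assms(2)[rule_format, of n] obtain B where "B \<subseteq> A n" "countable B" "y \<in> X closure_of B"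
      by (rule countably_tight_closure_ofD)
    then show ?thesis
      by blast
  qed
  then show thesis
    using that by metis
qed

lemma countably_tight_if_countable_topspace:
  "countable (topspace X) \<Longrightarrow> countably_tight X"
  unfolding countably_tight_def by (metis countable_subset order_refl)

lemma countably_tight_prod_topology_imp_left:
  assumes tight: "countably_tight (prod_topology X Y)" and "topspace Y \<noteq> {}"
  shows "countably_tight X"
  unfolding countably_tight_def
proof (intro allI impI)
  fix y A assume "y \<in> topspace X \<and> A \<subseteq> topspace X \<and> y \<in> X closure_of A"
  moreover obtain q where q: "q \<in> topspace Y" using assms(2) by blast
  ultimately have cl: "(y, q) \<in> prod_topology X Y closure_of (A \<times> {q})"
    using closure_of_subset[of "{q}" Y] by (auto simp: closure_of_Times)
  obtain C where C: "C \<subseteq> A \<times> {q}" "countable C" "(y, q) \<in> prod_topology X Y closure_of C"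
    using tight cl by (rule countably_tight_closure_ofD)
  moreover have "C \<subseteq> fst ` C \<times> {q}"
    using C(1) by force
  ultimately have "(y, q) \<in> prod_topology X Y closure_of (fst ` C \<times> {q})"
    using closure_of_mono by blast
  then have "y \<in> X closure_of (fst ` C)"
    by (simp add: closure_of_Times)
  moreover have "fst ` C \<subseteq> A" "countable (fst ` C)"
    using C by auto
  ultimately show "\<exists>B\<subseteq>A. countable B \<and> y \<in> X closure_of B"
    by blast
qed

lemma productively_countably_tight_imp_countably_tight:
  assumes "productively_countably_tight X"
  shows "countably_tight X"
proof (rule countably_tight_prod_topology_imp_left)
  let ?Y = "discrete_topology {{}} :: ('a \<times> nat) set set topology"
  have "countably_tight ?Y"
    by (rule countably_tight_if_countable_topspace) simp
  then show "countably_tight (prod_topology X ?Y)"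
    using assms unfolding productively_countably_tight_def by blast
  show "topspace ?Y \<noteq> {}" by simp
qed

lemma map_upt_eq_map_upt_iff:
  "map f [0..<k] = map g [0..<k'] \<longleftrightarrow> k = k' \<and> (\<forall>i<k. f i = g i)"
proof
  assume eq: "map f [0..<k] = map g [0..<k']"
  moreover from eq have "k = k'"
    by (metis diff_zero length_map length_upt)
  ultimately show "k = k' \<and> (\<forall>i<k. f i = g i)"
    by (simp add: map_eq_conv)
qed (simp add: map_eq_conv)

lemma countable_obtains_separating_prefix_lengths:
  fixes J :: "(nat \<Rightarrow> 'a) set"
  assumes "countable J"
  obtains N :: "(nat \<Rightarrow> 'a) \<Rightarrow> nat" where
    "\<And>w w' k k'. \<lbrakk>w \<in> J; w' \<in> J; N w \<le> k; N w' \<le> k'; map w [0..<k] = map w' [0..<k']\<rbrakk>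
      \<Longrightarrow> w = w'"
proof -
  define \<iota> where "\<iota> = to_nat_on J"
  have \<iota>: "inj_on \<iota> J"
    unfolding \<iota>_def using assms by (rule inj_on_to_nat_on)
  define N where "N w = Suc (Max (insert 0 ((\<lambda>w'. LEAST i. w i \<noteq> w' i) ` {w' \<in> J. \<iota> w' < \<iota> w})))"
    for w
  have no_agreement: False
    if "w \<in> J" "w' \<in> J" "\<iota> w' < \<iota> w" "N w \<le> k" "\<forall>i<k. w i = w' i" for w w' k
  proof -
    have "\<iota> ` {w' \<in> J. \<iota> w' < \<iota> w} \<subseteq> {..<\<iota> w}"
      by auto
    moreover have "inj_on \<iota> {w' \<in> J. \<iota> w' < \<iota> w}"
      using \<iota> by (rule inj_on_subset) auto
    ultimately have "finite {w' \<in> J. \<iota> w' < \<iota> w}"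
      by (metis finite_imageD finite_lessThan finite_subset)
    then have "(LEAST i. w i \<noteq> w' i) < N w"
      unfolding N_def using that(2,3) by (simp add: le_imp_less_Suc)
    moreover have "w (LEAST i. w i \<noteq> w' i) \<noteq> w' (LEAST i. w i \<noteq> w' i)"
    proof (rule LeastI_ex)
      show "\<exists>i. w i \<noteq> w' i"
        using that(3) by (metis ext less_irrefl)
    qed
    ultimately show False
      using that(4,5) by (meson order_less_le_trans)
  qed
  show thesis
  proof (rule that)
    fix w w' k k'
    assume "w \<in> J" "w' \<in> J" "N w \<le> k" "N w' \<le> k'" "map w [0..<k] = map w' [0..<k']"
    then show "w = w'"
      using no_agreement[of w w' k] no_agreement[of w' w k'] \<iota>
      by (metis inj_on_eq_iff linorder_neqE_nat map_upt_eq_map_upt_iff)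
  qed
qed

definition fan_topology :: "'b \<Rightarrow> ('i \<Rightarrow> nat \<Rightarrow> 'b) \<Rightarrow> 'i set \<Rightarrow> 'b topology" where
  "fan_topology p e I = topology (\<lambda>U. U \<subseteq> insert p (case_prod e ` (I \<times> UNIV)) \<and>
     (p \<in> U \<longrightarrow> (\<forall>i\<in>I. \<forall>\<^sub>F k in sequentially. e i k \<in> U)))"

lemma openin_fan_topology:
  "openin (fan_topology p e I) U \<longleftrightarrow>
     U \<subseteq> insert p (case_prod e ` (I \<times> UNIV)) \<and>
     (p \<in> U \<longrightarrow> (\<forall>i\<in>I. \<forall>\<^sub>F k in sequentially. e i k \<in> U))"
proof -
  have "istopology (\<lambda>U. U \<subseteq> insert p (case_prod e ` (I \<times> UNIV)) \<and>
     (p \<in> U \<longrightarrow> (\<forall>i\<in>I. \<forall>\<^sub>F k in sequentially. e i k \<in> U)))"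
    unfolding istopology_def
  proof (intro conjI allI impI)
    fix K assume K: "\<forall>U\<in>K. U \<subseteq> insert p (case_prod e ` (I \<times> UNIV)) \<and>
      (p \<in> U \<longrightarrow> (\<forall>i\<in>I. \<forall>\<^sub>F k in sequentially. e i k \<in> U))"
    show "\<Union>K \<subseteq> insert p (case_prod e ` (I \<times> UNIV))"
      using K by blast
    assume "p \<in> \<Union>K"
    with K obtain U where U: "U \<in> K" "\<forall>i\<in>I. \<forall>\<^sub>F k in sequentially. e i k \<in> U"
      by blast
    show "\<forall>i\<in>I. \<forall>\<^sub>F k in sequentially. e i k \<in> \<Union>K"
    proof
      fix i assume "i \<in> I"
      with U(2) have "\<forall>\<^sub>F k in sequentially. e i k \<in> U" ..
      then show "\<forall>\<^sub>F k in sequentially. e i k \<in> \<Union>K"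
        by (rule eventually_mono) (use U(1) in blast)
    qed
  qed (auto intro: eventually_conj)
  then show ?thesis
    unfolding fan_topology_def by simp
qed

lemma topspace_fan_topology:
  "topspace (fan_topology p e I) = insert p (case_prod e ` (I \<times> UNIV))"
proof -
  have "openin (fan_topology p e I) (insert p (case_prod e ` (I \<times> UNIV)))"
    unfolding openin_fan_topology by (auto intro!: eventuallyI)
  then have "insert p (case_prod e ` (I \<times> UNIV)) \<subseteq> topspace (fan_topology p e I)"
    by (rule openin_subset)
  moreover have "topspace (fan_topology p e I) \<subseteq> insert p (case_prod e ` (I \<times> UNIV))"
    unfolding topspace_def openin_fan_topology by blast
  ultimately show ?thesis
    by (rule subset_antisym[rotated])
qed

lemma spine_in_topspace_fan_topology: "i \<in> I \<Longrightarrow> e i k \<in> topspace (fan_topology p e I)"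
  by (force simp: topspace_fan_topology)

lemma openin_fan_topology_tails:
  "openin (fan_topology p e I) (insert p (case_prod e ` {(i, k). i \<in> I \<and> M i \<le> k}))"
  unfolding openin_fan_topology
proof (intro conjI impI ballI)
  show "insert p (case_prod e ` {(i, k). i \<in> I \<and> M i \<le> k}) \<subseteq> insert p (case_prod e ` (I \<times> UNIV))"
    by auto
  fix i assume "i \<in> I"
  then have "\<forall>k\<ge>M i. e i k \<in> insert p (case_prod e ` {(i, k). i \<in> I \<and> M i \<le> k})"
    by force
  then show "\<forall>\<^sub>F k in sequentially. e i k \<in> insert p (case_prod e ` {(i, k). i \<in> I \<and> M i \<le> k})"
    unfolding eventually_sequentially by blast
qed

lemma countably_tight_fan_topology: "countably_tight (fan_topology p e I)"
  unfolding countably_tight_def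
proof (intro allI impI)
  let ?Y = "fan_topology p e I"
  fix y T assume "y \<in> topspace ?Y \<and> T \<subseteq> topspace ?Y \<and> y \<in> ?Y closure_of T"
  then have y: "y \<in> topspace ?Y" and cl: "y \<in> ?Y closure_of T"
    by blast+
  show "\<exists>B\<subseteq>T. countable B \<and> y \<in> ?Y closure_of B"
  proof (cases "y \<in> T")
    case True
    then show ?thesis
      using y by (intro exI[of _ "{y}"]) (auto simp: in_closure_of)
  next
    case False
    have "y = p"
    proof (rule ccontr)
      assume "y \<noteq> p"
      then have "openin ?Y {y}"
        using y by (simp add: openin_fan_topology topspace_fan_topology)
      then show False
        using cl False by (auto simp: in_closure_of)
    qed
    have "\<exists>i\<in>I. \<exists>\<^sub>F k in sequentially. e i k \<in> T"
    proof (rule ccontr)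
      assume "\<not> ?thesis"
      then have "\<forall>i\<in>I. \<forall>\<^sub>F k in sequentially. e i k \<in> topspace ?Y - T"
        by (auto simp: not_frequently spine_in_topspace_fan_topology elim!: eventually_mono)
      then have "openin ?Y (topspace ?Y - T)"
        by (auto simp: openin_fan_topology topspace_fan_topology)
      then show False
        using cl False y by (auto simp: in_closure_of)
    qed
    then obtain i where i: "i \<in> I" "\<exists>\<^sub>F k in sequentially. e i k \<in> T"
      by blast
    have "p \<in> ?Y closure_of (T \<inter> range (e i))"
      unfolding in_closure_of
    proof (intro conjI allI impI)
      show "p \<in> topspace ?Y"
        by (simp add: topspace_fan_topology)
      fix V assume "p \<in> V \<and> openin ?Y V"
      then have "\<forall>\<^sub>F k in sequentially. e i k \<in> V"
        using i(1) by (simp add: openin_fan_topology)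
      then obtain k where "e i k \<in> T" "e i k \<in> V"
        using frequently_eventually_frequently[OF i(2)] by (blast dest: frequently_ex)
      then show "\<exists>z. z \<in> T \<inter> range (e i) \<and> z \<in> V"
        by blast
    qed
    then show ?thesis
      using \<open>y = p\<close> by (intro exI[of _ "T \<inter> range (e i)"]) auto
  qed
qed

lemma closure_of_fan_product_selectors:
  assumes x: "x \<in> topspace X" "\<And>n. x \<in> X closure_of B n"
    and selectors: "{w. \<forall>n. w n \<in> B n} \<subseteq> S"
  shows "(x, p) \<in> prod_topology X (fan_topology p e S) closure_of
           {(w (c w k), e w k) | w k. w \<in> S}"
  unfolding in_closure_of
proof (intro conjI allI impI)
  show "(x, p) \<in> topspace (prod_topology X (fan_topology p e S))"
    using x(1) by (simp add: topspace_fan_topology)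
  fix W assume "(x, p) \<in> W \<and> openin (prod_topology X (fan_topology p e S)) W"
  then obtain U V where UV: "openin X U" "openin (fan_topology p e S) V" "x \<in> U" "p \<in> V" "U \<times> V \<subseteq> W"
    unfolding openin_prod_topology_alt by blast
  have "\<forall>n. \<exists>b. b \<in> B n \<and> b \<in> U"
    using x(2) UV(1,3) unfolding in_closure_of by blast
  then obtain w where w: "\<And>n. w n \<in> B n \<and> w n \<in> U"
    by metis
  then have "w \<in> S"
    using selectors by blast
  with UV(2,4) have "\<forall>\<^sub>F k in sequentially. e w k \<in> V"
    by (simp add: openin_fan_topology)
  then obtain k where "e w k \<in> V"
    by (meson eventually_happens' sequentially_bot)
  then have "(w (c w k), e w k) \<in> W"
    using w UV(5) by blast
  then show "\<exists>z. z \<in> {(w (c w k), e w k) | w k. w \<in> S} \<and> z \<in> W"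
    using \<open>w \<in> S\<close> by blast
qed

lemma countable_spines_meeting:
  assumes "countable C" and e_inj: "inj_on (case_prod e) (S \<times> UNIV)"
  shows "countable {i \<in> S. \<exists>k. (g i k, e i k) \<in> C}"
proof (rule countable_subset)
  show "{i \<in> S. \<exists>k. (g i k, e i k) \<in> C} \<subseteq> (\<lambda>z. fst (inv_into (S \<times> UNIV) (case_prod e) (snd z))) ` C"
  proof
    fix i assume "i \<in> {i \<in> S. \<exists>k. (g i k, e i k) \<in> C}"
    then obtain k where k: "i \<in> S" "(g i k, e i k) \<in> C"
      by blast
    have "inv_into (S \<times> UNIV) (case_prod e) (e i k) = (i, k)"
      using inv_into_f_f[OF e_inj, of "(i, k)"] k(1) by simp
    then show "i \<in> (\<lambda>z. fst (inv_into (S \<times> UNIV) (case_prod e) (snd z))) ` C"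
      using k(2) by force
  qed
qed (use assms(1) in simp)

lemma obtains_selector_agreeing_on_tails:
  fixes B :: "nat \<Rightarrow> 'a set" and pos :: "(nat \<Rightarrow> 'a) \<Rightarrow> nat \<Rightarrow> nat"
  assumes J: "J \<subseteq> {w. \<forall>n. w n \<in> B n}" and B: "\<And>n. B n \<noteq> {}"
    and disjoint: "\<And>w w' k k'. \<lbrakk>w \<in> J; w' \<in> J; N w \<le> k; N w' \<le> k'; pos w k = pos w' k'\<rbrakk>
      \<Longrightarrow> w = w'"
  obtains h where "\<And>n. h n \<in> B n" "\<And>w k. \<lbrakk>w \<in> J; N w \<le> k\<rbrakk> \<Longrightarrow> h (pos w k) = w (pos w k)"
proof -
  define h where "h n = (if \<exists>w\<in>J. \<exists>k\<ge>N w. pos w k = n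
                         then (SOME w. w \<in> J \<and> (\<exists>k\<ge>N w. pos w k = n)) n
                         else (SOME b. b \<in> B n))" for n
  have "h n \<in> B n" for n
  proof (cases "\<exists>w\<in>J. \<exists>k\<ge>N w. pos w k = n")
    case True
    then have "\<exists>w. w \<in> J \<and> (\<exists>k\<ge>N w. pos w k = n)"
      by blast
    then have "(SOME w. w \<in> J \<and> (\<exists>k\<ge>N w. pos w k = n)) \<in> J"
      by (rule someI2_ex) blast
    then show ?thesis
      unfolding h_def if_P[OF True] using J by auto
  next
    case False
    then show ?thesis
      unfolding h_def if_not_P[OF False] using B by (simp add: some_in_eq)
  qed
  moreover have "h (pos w k) = w (pos w k)" if "w \<in> J" "N w \<le> k" for w k
  proof -
    let ?w = "SOME w'. w' \<in> J \<and> (\<exists>k'\<ge>N w'. pos w' k' = pos w k)"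
    have "?w \<in> J \<and> (\<exists>k'\<ge>N ?w. pos ?w k' = pos w k)"
      by (rule someI[of _ w]) (use that in blast)
    then have "?w = w"
      using disjoint that by blast
    moreover have "\<exists>w'\<in>J. \<exists>k'\<ge>N w'. pos w' k' = pos w k"
      using that by blast
    ultimately show ?thesis
      unfolding h_def by simp
  qed
  ultimately show thesis
    by (rule that)
qed

lemma selector_accumulating_if_countably_tight_fan_product:
  fixes B :: "nat \<Rightarrow> 'a set" and e :: "(nat \<Rightarrow> 'a) \<Rightarrow> nat \<Rightarrow> 'b"
  defines "S \<equiv> {w. \<forall>n. w n \<in> B n}"
  assumes tight: "countably_tight (prod_topology X (fan_topology p e S))"
    and e_inj: "inj_on (case_prod e) (S \<times> UNIV)"
    and apex: "p \<notin> case_prod e ` (S \<times> UNIV)"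
    and B: "countable (\<Union>n. B n)"
    and x: "x \<in> topspace X" "\<And>n. x \<in> X closure_of B n"
  obtains h where "\<And>n. h n \<in> B n" "x \<in> X closure_of range h"
proof -
  obtain code :: "'a list \<Rightarrow> nat" where code: "inj_on code (lists (\<Union>n. B n))"
    using countable_lists[OF B] unfolding countable_def by blast
  define pos where "pos w k = code (map w [0..<k])" for w k
  have pos_inj: "map w [0..<k] = map w' [0..<k']"
    if "w \<in> S" "w' \<in> S" "pos w k = pos w' k'" for w w' k k'
  proof (rule inj_onD[OF code])
    show "code (map w [0..<k]) = code (map w' [0..<k'])"
      using that(3) by (simp add: pos_def)
    show "map w [0..<k] \<in> lists (\<Union>n. B n)" "map w' [0..<k'] \<in> lists (\<Union>n. B n)"
      using that(1,2) by (auto simp: S_def) blast+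
  qed
  have "(x, p) \<in> prod_topology X (fan_topology p e S) closure_of {(w (pos w k), e w k) | w k. w \<in> S}"
    using x by (rule closure_of_fan_product_selectors[where B = B]) (simp add: S_def)
  with tight obtain C where C: "C \<subseteq> {(w (pos w k), e w k) | w k. w \<in> S}" "countable C"
    "(x, p) \<in> prod_topology X (fan_topology p e S) closure_of C"
    by (rule countably_tight_closure_ofD)
  define J where "J = {w \<in> S. \<exists>k. (w (pos w k), e w k) \<in> C}"
  have "countable J"
    unfolding J_def using C(2) e_inj by (rule countable_spines_meeting)
  then obtain N where N: "\<And>w w' k k'. \<lbrakk>w \<in> J; w' \<in> J; N w \<le> k; N w' \<le> k';
      map w [0..<k] = map w' [0..<k']\<rbrakk> \<Longrightarrow> w = w'"
    using countable_obtains_separating_prefix_lengths by blast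
  have "J \<subseteq> S"
    by (auto simp: J_def)
  obtain h where h: "\<And>n. h n \<in> B n" "\<And>w k. \<lbrakk>w \<in> J; N w \<le> k\<rbrakk> \<Longrightarrow> h (pos w k) = w (pos w k)"
  proof (rule obtains_selector_agreeing_on_tails[where J = J and B = B and N = N and pos = pos])
    show "J \<subseteq> {w. \<forall>n. w n \<in> B n}"
      using \<open>J \<subseteq> S\<close> by (simp add: S_def)
    show "B n \<noteq> {}" for n
      using x(2)[of n] by auto
    show "w = w'" if "w \<in> J" "w' \<in> J" "N w \<le> k" "N w' \<le> k'" "pos w k = pos w' k'" for w w' k k'
      using N[OF that(1-4) pos_inj] that(5) \<open>J \<subseteq> S\<close> that(1,2) by blast
  qed blast
  have "x \<in> X closure_of range h"
    unfolding in_closure_of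
  proof (intro conjI allI impI)
    show "x \<in> topspace X"
      by (rule x(1))
    fix U assume U: "x \<in> U \<and> openin X U"
    define V where "V = insert p (case_prod e ` {(w, k). w \<in> S \<and> (if w \<in> J then N w else 0) \<le> k})"
    have "openin (fan_topology p e S) V"
      unfolding V_def by (rule openin_fan_topology_tails)
    then have "openin (prod_topology X (fan_topology p e S)) (U \<times> V)" "(x, p) \<in> U \<times> V"
      using U by (auto simp: openin_prod_Times_iff V_def)
    then obtain w k where wk: "w \<in> S" "(w (pos w k), e w k) \<in> C" "w (pos w k) \<in> U" "e w k \<in> V"
      using C(1) C(3)[unfolded in_closure_of, THEN conjunct2, rule_format, of "U \<times> V"] by blast
    then have "w \<in> J"
      by (auto simp: J_def)
    have "e w k \<noteq> p"
      using apex wk(1) by force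
    with wk(4) obtain w' k' where "w' \<in> S" "(if w' \<in> J then N w' else 0) \<le> k'" "e w k = e w' k'"
      by (auto simp: V_def)
    then have "N w \<le> k"
      using inj_onD[OF e_inj, of "(w, k)" "(w', k')"] wk(1) \<open>w \<in> J\<close> by auto
    with \<open>w \<in> J\<close> have "h (pos w k) = w (pos w k)"
      by (rule h(2))
    with wk(3) show "\<exists>y. y \<in> range h \<and> y \<in> U"
      by (metis rangeI)
  qed
  with h(1) show thesis
    by (rule that)
qed

text \<open>The test spaces in \<open>productively_countably_tight\<close> live on \<open>('a \<times> nat) set set\<close>, so the
  spine point \<open>(w, k)\<close> of the fan is encoded as a nonempty set of that type and \<open>{}\<close> serves
  as the apex.\<close>

definition fan_point :: "(nat \<Rightarrow> 'a) \<Rightarrow> nat \<Rightarrow> ('a \<times> nat) set set" where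
  "fan_point w k = range (\<lambda>n. {(w n, n + k)})"

lemma fan_point_nonempty: "fan_point w k \<noteq> {}"
  by (simp add: fan_point_def)

lemma fan_point_inj: "inj (case_prod fan_point)"
proof (rule injI, clarify)
  fix w k w' k' assume eq: "fan_point w k = fan_point w' k'"
  have shifted: "\<exists>m. (v n, n + l) = (v' m, m + l')"
    if "fan_point v l = fan_point v' l'" for v l v' l' n
  proof -
    have "{(v n, n + l)} \<in> fan_point v' l'"
      using that by (auto simp: fan_point_def)
    then show ?thesis
      by (auto simp: fan_point_def)
  qed
  have "k = k'"
    using shifted[OF eq, of 0] shifted[OF eq[symmetric], of 0] by fastforce
  moreover have "w n = w' n" for n
    using shifted[OF eq, of n] \<open>k = k'\<close> by auto
  ultimately show "w = w' \<and> k = k'"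
    by auto
qed

lemma productively_countably_tight_obtains_selector:
  fixes B :: "nat \<Rightarrow> 'a set"
  assumes "productively_countably_tight X" "x \<in> topspace X"
    and "\<And>n. countable (B n)" "\<And>n. x \<in> X closure_of B n"
  obtains h where "\<And>n. h n \<in> B n" "x \<in> X closure_of range h"
proof -
  let ?S = "{w. \<forall>n. w n \<in> B n}"
  have "countably_tight (fan_topology {} fan_point ?S)"
    by (rule countably_tight_fan_topology)
  then have "countably_tight (prod_topology X (fan_topology {} fan_point ?S))"
    using assms(1) unfolding productively_countably_tight_def by blast
  then show thesis
  proof (rule selector_accumulating_if_countably_tight_fan_product)
    show "inj_on (case_prod fan_point) (?S \<times> UNIV)"
      using fan_point_inj by (rule inj_on_subset) simp
    show "{} \<notin> case_prod fan_point ` (?S \<times> UNIV)"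
      using fan_point_nonempty by force
    show "countable (\<Union>n. B n)"
      using assms(3) by blast
  qed (use assms(2,4) that in auto)
qed

theorem corollary2p8:
  fixes X :: "'a topology"
  assumes "productively_countably_tight X"
  shows "\<forall>x \<in> topspace X. S1_Omega X x"
  unfolding S1_Omega_def
proof (intro ballI allI impI)
  fix x and A :: "nat \<Rightarrow> 'a set"
  assume x: "x \<in> topspace X" and A: "\<forall>n. A n \<in> Omega_pt X x"
  have "countably_tight X"
    using assms by (rule productively_countably_tight_imp_countably_tight)
  moreover have "\<forall>n. x \<in> X closure_of A n"
    using A by (simp add: Omega_pt_def)
  ultimately obtain B where B: "\<And>n. B n \<subseteq> A n" "\<And>n. countable (B n)" "\<And>n. x \<in> X closure_of B n"
    by (rule countably_tight_obtains_countable_subsets) blast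
  obtain h where h: "\<And>n. h n \<in> B n" "x \<in> X closure_of range h"
    using productively_countably_tight_obtains_selector[where B = B, OF assms x B(2,3)] by blast
  have "\<And>n. h n \<in> A n"
    using h(1) B(1) by blast
  then have "range h \<in> Omega_pt X x"
    using h(2) A unfolding Omega_pt_def by blast
  with \<open>\<And>n. h n \<in> A n\<close> show "\<exists>a. (\<forall>n. a n \<in> A n) \<and> range a \<in> Omega_pt X x"
    by blast
qed

end
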